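(* Let $\psi\in\mathcal C$, let $F_1,F_2:\mathbb R\to(0,\infty)$ be measurable and let $h\in\Phi\cup\Psi$. Then for every $T\in SL_{\pm}(n)$, $$as^{orlicz}_{h,F_1,F_2}(\psi\circ T)=as^{orlicz}_{h,F_1,F_2}(\psi)\quad\text{and}\quad G^{orlicz}_{h,F_1,F_2}(\psi\circ T)=G^{orlicz}_{h,F_1,F_2}(\psi).$$ In particular, for $f=e^{-\psi}$, $as^{orlicz}_h(f)$ and $G^{orlicz}_h(f)$ are $SL_{\pm}(n)$-invariant.
   Context: $\mathcal C$ is the set of convex functions $\psi:\mathbb R^n\to\mathbb R\cup\{+\infty\}$ whose domain has nonempty interior; $\psi^*(y)=\sup_x(\langle x,y\rangle-\psi(x))$; $\nabla^2\psi$ is the Alexandrov Hessian; $X_\psi=\{x:\psi(x)<\infty,\ \nabla^2\psi(x)\text{ exists and is invertible}\}$. $I(g,\psi^* )=\int_{X_{\psi^*}}g$; $\mathcal F^+_{\psi^*}$ is the set of integrable $g>0$ on $X_{\psi^*}$ with $0<I(g,\psi^* )<\infty$; $\mathcal L_{\psi^*}$ is the subset of log-concave members of $\mathcal F^+_{\psi^*}$. For continuous $h:(0,\infty)\to(0,\infty)$, $V_{h,F_1,F_2}(\psi,g)=\int_{X_\psi}h\big(\frac{g(\nabla\psi(x))}{F_2(\langle x,\nabla\psi(x)\rangle-\psi(x))}\big)F_1(\psi(x))dx$. $\Phi$ is the set of $h$ that are constant or strictly convex; $\Psi$ is the set of $h$ that are constant or increasing and strictly concave. For $h\in\Phi$: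 $$as^{orlicz}_{h,F_1,F_2}(\psi)=\inf_{g\in\mathcal F^+_{\psi^*}}V_{h,F_1,F_2}\Big(\psi,\tfrac{(\sqrt{2\pi})^n g}{I(g,\psi^* )}\Big),\qquad G^{orlicz}_{h,F_1,F_2}(\psi)=\inf_{g\in\mathcal L_{\psi^*}}V_{h,F_1,F_2}\Big(\psi,\tfrac{(\sqrt{2\pi})^n g}{I(g,\psi^* )}\Big);$$ for $h\in\Psi$ the same with $\inf$ replaced by $\sup$. For $f=e^{-\psi}$: $as^{orlicz}_h(f)=as^{orlicz}_{h,e^{-t},e^{-t}}(\psi)$ and $G^{orlicz}_h(f)=G^{orlicz}_{h,e^{-t},e^{-t}}(\psi)$. $SL_{\pm}(n)$ is the set of linear maps with determinant $\pm1$, $(\psi\circ T)(x)=\psi(Tx)$, and for $f=e^{-\psi}$ invariance means $as^{orlicz}_h(f\circ T)=as^{orlicz}_h(f)$ etc. Standing assumption: all integrals are well defined. *)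

theory Defs
  imports "HOL-Analysis.Analysis"
begin

text \<open>Functions on R^n are modelled on \<open>real ^ 'n\<close> (n = CARD('n)); functions with
  values in R \<union> {+\<infinity>} are \<open>ereal\<close>-valued functions never equal to -\<infinity>.\<close>

definition edom :: "('a \<Rightarrow> ereal) \<Rightarrow> 'a set" where
  "edom \<psi> = {x. \<psi> x < \<infinity>}"

definition convex_class :: "(real ^ 'n::finite \<Rightarrow> ereal) \<Rightarrow> bool" where
  "convex_class \<psi> \<longleftrightarrow> (\<forall>x. \<psi> x \<noteq> -\<infinity>) \<and> convex (edom \<psi>)
     \<and> convex_on (edom \<psi>) (\<lambda>x. real_of_ereal (\<psi> x)) \<and> interior (edom \<psi>) \<noteq> {}"

definition legendre :: "(real ^ 'n::finite \<Rightarrow> ereal) \<Rightarrow> real ^ 'n \<Rightarrow> ereal" where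
  "legendre \<psi> y = (SUP x. ereal (x \<bullet> y) - \<psi> x)"

definition alex_hess :: "(real ^ 'n::finite \<Rightarrow> ereal) \<Rightarrow> real ^ 'n \<Rightarrow> real ^ 'n
    \<Rightarrow> real ^ 'n ^ 'n \<Rightarrow> bool" where
  "alex_hess \<psi> x g A \<longleftrightarrow> x \<in> interior (edom \<psi>) \<and> transpose A = A \<and>
     ((\<lambda>h. (real_of_ereal (\<psi> (x + h)) - real_of_ereal (\<psi> x) - g \<bullet> h
             - (1/2) * (h \<bullet> (A *v h))) / (norm h)\<^sup>2) \<longlongrightarrow> 0) (at 0)"

definition grad :: "(real ^ 'n::finite \<Rightarrow> ereal) \<Rightarrow> real ^ 'n \<Rightarrow> real ^ 'n" where
  "grad \<psi> x = (SOME g. \<exists>A. alex_hess \<psi> x g A)"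

definition Xset :: "(real ^ 'n::finite \<Rightarrow> ereal) \<Rightarrow> (real ^ 'n) set" where
  "Xset \<psi> = {x. \<psi> x < \<infinity> \<and> (\<exists>g A. alex_hess \<psi> x g A \<and> invertible A)}"

definition Iint :: "(real ^ 'n::finite \<Rightarrow> real) \<Rightarrow> (real ^ 'n \<Rightarrow> ereal) \<Rightarrow> real" where
  "Iint g \<phi> = (LINT y:Xset \<phi>|lebesgue. g y)"

definition Fplus :: "(real ^ 'n::finite \<Rightarrow> ereal) \<Rightarrow> (real ^ 'n \<Rightarrow> real) set" where
  "Fplus \<phi> = {g. (\<forall>y\<in>Xset \<phi>. 0 < g y) \<and> set_integrable lebesgue (Xset \<phi>) g \<and> 0 < Iint g \<phi>}"

definition log_concave :: "('a::real_vector \<Rightarrow> real) \<Rightarrow> bool" where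
  "log_concave g \<longleftrightarrow> (\<forall>x. 0 \<le> g x) \<and>
     (\<forall>x y t. 0 < t \<and> t < 1 \<longrightarrow> g x powr (1 - t) * g y powr t \<le> g ((1 - t) *\<^sub>R x + t *\<^sub>R y))"

definition Lclass :: "(real ^ 'n::finite \<Rightarrow> ereal) \<Rightarrow> (real ^ 'n \<Rightarrow> real) set" where
  "Lclass \<phi> = {g \<in> Fplus \<phi>. log_concave g}"

text \<open>V_{h,F1,F2}(\<psi>,g); the integrand is positive, so the integral is taken in [0,\<infinity>].\<close>
definition Vorl :: "(real \<Rightarrow> real) \<Rightarrow> (real \<Rightarrow> real) \<Rightarrow> (real \<Rightarrow> real)
    \<Rightarrow> (real ^ 'n::finite \<Rightarrow> ereal) \<Rightarrow> (real ^ 'n \<Rightarrow> real) \<Rightarrow> ennreal" where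
  "Vorl h F1 F2 \<psi> g = (\<integral>\<^sup>+ x \<in> Xset \<psi>.
      ennreal (h (g (grad \<psi> x) / F2 (x \<bullet> grad \<psi> x - real_of_ereal (\<psi> x)))
               * F1 (real_of_ereal (\<psi> x))) \<partial>lebesgue)"

definition normalize :: "(real ^ 'n::finite \<Rightarrow> ereal) \<Rightarrow> (real ^ 'n \<Rightarrow> real) \<Rightarrow> real ^ 'n \<Rightarrow> real" where
  "normalize \<psi> g = (\<lambda>y. (sqrt (2 * pi)) ^ CARD('n) * g y / Iint g (legendre \<psi>))"

text \<open>The Orlicz affine surface areas: inf-version (h in \<Phi>), sup-version (h in \<Psi>).\<close>
definition as_orlicz_inf where
  "as_orlicz_inf h F1 F2 \<psi> = (INF g\<in>Fplus (legendre \<psi>). Vorl h F1 F2 \<psi> (normalize \<psi> g))"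
definition as_orlicz_sup where
  "as_orlicz_sup h F1 F2 \<psi> = (SUP g\<in>Fplus (legendre \<psi>). Vorl h F1 F2 \<psi> (normalize \<psi> g))"
definition G_orlicz_inf where
  "G_orlicz_inf h F1 F2 \<psi> = (INF g\<in>Lclass (legendre \<psi>). Vorl h F1 F2 \<psi> (normalize \<psi> g))"
definition G_orlicz_sup where
  "G_orlicz_sup h F1 F2 \<psi> = (SUP g\<in>Lclass (legendre \<psi>). Vorl h F1 F2 \<psi> (normalize \<psi> g))"

definition strictly_convex_on :: "real set \<Rightarrow> (real \<Rightarrow> real) \<Rightarrow> bool" where
  "strictly_convex_on S f \<longleftrightarrow> (\<forall>x\<in>S. \<forall>y\<in>S. \<forall>t. x \<noteq> y \<and> 0 < t \<and> t < 1 \<longrightarrow>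
      f ((1 - t) * x + t * y) < (1 - t) * f x + t * f y)"

definition strictly_concave_on :: "real set \<Rightarrow> (real \<Rightarrow> real) \<Rightarrow> bool" where
  "strictly_concave_on S f \<longleftrightarrow> strictly_convex_on S (\<lambda>x. - f x)"

definition PhiClass :: "(real \<Rightarrow> real) set" where
  "PhiClass = {h. (\<exists>c. \<forall>t>0. h t = c) \<or> strictly_convex_on {0<..} h}"

definition PsiClass :: "(real \<Rightarrow> real) set" where
  "PsiClass = {h. (\<exists>c. \<forall>t>0. h t = c) \<or> (mono_on {0<..} h \<and> strictly_concave_on {0<..} h)}"

end

theory Submission
  imports Defs
begin

text \<open>A linear map \<open>T\<close> with \<open>|det T| = 1\<close> preserves Lebesgue measure. For \<open>\<psi> \<circ> T\<close> the
  Alexandrov Hessian at \<open>x\<close> is \<open>T\<^sup>T \<nabla>\<^sup>2\<psi>(T x) T\<close> and the gradient is \<open>T\<^sup>T \<nabla>\<psi>(T x)\<close>, so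
  \<open>X\<^bsub>\<psi>\<circ>T\<^esub> = T\<^sup>-\<^sup>1 X\<^bsub>\<psi>\<^esub>\<close>, while \<open>(\<psi> \<circ> T)\<^sup>* = \<psi>\<^sup>* \<circ> T\<^sup>-\<^sup>T\<close>. Hence \<open>g \<mapsto> g \<circ> T\<^sup>-\<^sup>T\<close> maps the admissible
  densities for \<open>\<psi>\<close> bijectively onto those for \<open>\<psi> \<circ> T\<close>, keeps the normalising integral, and the
  substitution \<open>x \<mapsto> T x\<close> turns the integrand of \<open>V(\<psi> \<circ> T, g \<circ> T\<^sup>-\<^sup>T)\<close> into that of \<open>V(\<psi>, g)\<close>:
  the extremal problems defining the four functionals coincide.\<close>

section \<open>Lebesgue measure under linear maps\<close>

lemma det_matrix_shear:
  fixes m n :: "'n::finite"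
  assumes "m \<noteq> n"
  shows "det (matrix (\<lambda>x::real^'n. \<chi> i. if i = m then x$m + x$n else x$i)) = 1"
proof -
  have "matrix (\<lambda>x::real^'n. \<chi> i. if i = m then x$m + x$n else x$i)
      = (\<chi> k. if k = m then row m (mat 1) + 1 *s row n (mat 1) else row k (mat 1))"
    by (auto simp: vec_eq_iff matrix_def axis_def row_def mat_def)
  then show ?thesis
    using det_row_operation[OF assms, of "mat 1" 1] by simp
qed

lemma measure_shear_image:
  fixes S :: "(real^'n::finite) set"
  assumes "m \<noteq> n" "S \<in> lmeasurable"
  defines "f \<equiv> \<lambda>x::real^'n. \<chi> i. if i = m then x$m + x$n else x$i"
  shows "f ` S \<in> lmeasurable \<and> measure lebesgue (f ` S) = measure lebesgue S"
proof -
  have lin: "linear f"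
    unfolding f_def by (rule linearI) (auto simp: vec_eq_iff algebra_simps)
  have "measure lebesgue (f ` cbox a b) = 1 * measure lebesgue (cbox a b)" for a b
  proof (cases "cbox a b = {}")
    case False
    have box: "cbox a b = (+) a ` cbox 0 (b - a)"
      using cbox_translation[of a 0 "b - a"] by simp
    have "f ` cbox a b = (+) (f a) ` f ` cbox 0 (b - a)"
      unfolding box image_image by (simp add: linear_add[OF lin])
    then have "measure lebesgue (f ` cbox a b) = measure lebesgue (f ` cbox 0 (b - a))"
      by (simp add: measure_translation)
    also have "\<dots> = measure lebesgue (cbox 0 (b - a))"
      unfolding f_def using False assms(1) by (intro measure_shear_interval) (auto simp: box)
    also have "\<dots> = measure lebesgue (cbox a b)"
      by (simp add: box measure_translation)
    finally show ?thesis by simp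
  qed simp
  from measure_linear_sufficient[OF lin assms(2) this] show ?thesis
    by simp
qed

text \<open>The library's \<open>measure_linear_image\<close> asks for a well-ordered index type; only its
  computation of the determinant of a shear needs that, so the argument is redone here
  for an arbitrary finite index type.\<close>

proposition
  fixes f :: "real^'n::finite \<Rightarrow> real^'n"
  assumes "linear f" "S \<in> lmeasurable"
  shows lmeasurable_linear_image: "f ` S \<in> lmeasurable"
    and measure_linear_image_finite:
      "measure lebesgue (f ` S) = \<bar>det (matrix f)\<bar> * measure lebesgue S"
proof -
  define P where "P f \<longleftrightarrow> (\<forall>S \<in> lmeasurable. f ` S \<in> lmeasurable \<and>
      measure lebesgue (f ` S) = \<bar>det (matrix f)\<bar> * measure lebesgue S)"
    for f :: "real^'n \<Rightarrow> real^'n"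
  have comp: "P (f \<circ> g)" if "linear f" "linear g" "P f" "P g" for f g
    unfolding P_def
  proof (intro ballI conjI)
    fix S :: "(real^'n) set"
    assume "S \<in> lmeasurable"
    then have "g ` S \<in> lmeasurable" "measure lebesgue (g ` S) = \<bar>det (matrix g)\<bar> * measure lebesgue S"
      using \<open>P g\<close> by (auto simp: P_def)
    then show "(f \<circ> g) ` S \<in> lmeasurable"
      "measure lebesgue ((f \<circ> g) ` S) = \<bar>det (matrix (f \<circ> g))\<bar> * measure lebesgue S"
      using \<open>P f\<close> matrix_compose[OF \<open>linear g\<close> \<open>linear f\<close>]
      unfolding P_def image_comp[symmetric] by (auto simp: det_mul abs_mult)
  qed
  have stretch: "P (\<lambda>x. \<chi> i. c i * x$i)" for c
    by (simp add: P_def measurable_stretch measure_stretch matrix_def axis_def det_diagonal)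
  let ?E = "\<lambda>m n (x::real^'n). \<chi> i. if i = m then x$m + x$n else x$i"
  have shear: "P (?E m n)" if "m \<noteq> n" for m n
    using measure_shear_image[OF that] det_matrix_shear[OF that] by (simp add: P_def)
  have lin_shear: "linear (?E m n)" for m n
    by (rule linearI) (auto simp: vec_eq_iff algebra_simps)
  have swap: "P (\<lambda>x. \<chi> i. x $ Transposition.transpose m n i)" if "m \<noteq> n" for m n
  proof -
    let ?D = "\<lambda>x::real^'n. \<chi> i. (if i = n then -1 else 1) * x$i"
    define A where "A = ?D \<circ> ?E m n"
    define B where "B = ?D \<circ> ?E n m"
    have lin_D: "linear ?D"
      by (rule linearI) (auto simp: vec_eq_iff algebra_simps)
    have lin: "linear A" "linear B"
      unfolding A_def B_def by (intro linear_compose lin_D lin_shear)+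
    have PA: "P A" and PB: "P B"
      unfolding A_def B_def using that by (intro comp lin_D lin_shear stretch shear; simp)+
    \<comment> \<open>on the coordinates \<open>m, n\<close>: \<open>(a, b) \<mapsto> (a+b, -b) \<mapsto> (a+b, a) \<mapsto> (b, -a) \<mapsto> (b, a)\<close>\<close>
    have "(\<lambda>x. \<chi> i. x $ Transposition.transpose m n i) = A \<circ> B \<circ> A"
      using that by (auto simp: A_def B_def fun_eq_iff vec_eq_iff Transposition.transpose_def)
    moreover have "P (A \<circ> B \<circ> A)"
      by (intro comp linear_compose lin PA PB)
    ultimately show ?thesis
      by simp
  qed
  have zero: "P f" if "linear f" "\<And>x. f x $ i = 0" for f i
  proof -
    have "f x \<noteq> axis i 1" for x
      using that(2)[of x] by (auto simp: axis_def vec_eq_iff)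
    then have "\<not> inj f"
      using linear_injective_imp_surjective[OF \<open>linear f\<close>] by (metis surjD)
    then have "det (matrix f) = 0"
      using det_nz_iff_inj[OF \<open>linear f\<close>] by blast
    moreover have "negligible (f ` S)" for S
      using \<open>\<not> inj f\<close> \<open>linear f\<close> negligible_linear_singular_image by blast
    ultimately show ?thesis
      by (simp add: P_def negligible_imp_measurable negligible_imp_measure0)
  qed
  have "P f"
    by (rule induct_linear_elementary[where P = P, OF \<open>linear f\<close> comp zero stretch swap shear])
  with assms show "f ` S \<in> lmeasurable" "measure lebesgue (f ` S) = \<bar>det (matrix f)\<bar> * measure lebesgue S"
    by (auto simp: P_def)
qed

lemma inverse_matrix_det_abs_1:
  fixes M :: "real^'n::finite^'n"
  assumes "\<bar>det M\<bar> = 1"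
  obtains M' where "M ** M' = mat 1" "M' ** M = mat 1" "\<bar>det M'\<bar> = 1"
proof -
  obtain M' where M': "M ** M' = mat 1" "M' ** M = mat 1"
    using assms invertible_det_nz[of M] unfolding invertible_def by auto
  then have "\<bar>det M\<bar> * \<bar>det M'\<bar> = 1"
    by (metis abs_mult abs_one det_I det_mul)
  with assms M' that show ?thesis
    by simp
qed

lemma distr_lborel_matrix_vector_mult:
  fixes M :: "real^'n::finite^'n"
  assumes "\<bar>det M\<bar> = 1"
  shows "distr lborel borel ((*v) M) = lborel"
proof -
  obtain M' where M': "M ** M' = mat 1" "M' ** M = mat 1" "\<bar>det M'\<bar> = 1"
    using inverse_matrix_det_abs_1[OF assms] .
  have meas: "(*v) M \<in> borel_measurable borel"
    by (intro borel_measurable_continuous_onI linear_continuous_on matrix_vector_mul_bounded_linear)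
  show ?thesis
  proof (rule lborel_eqI[symmetric])
    fix l u :: "real^'n"
    assume "\<And>b. b \<in> Basis \<Longrightarrow> l \<bullet> b \<le> u \<bullet> b"
    have pre: "(*v) M -` box l u = (*v) M' ` box l u"
    proof (intro set_eqI iffI)
      fix x assume "x \<in> (*v) M -` box l u"
      then show "x \<in> (*v) M' ` box l u"
        using M'(2) by (intro rev_image_eqI[of "M *v x"]) (auto simp: matrix_vector_mul_assoc)
    qed (use M'(1) in \<open>auto simp: matrix_vector_mul_assoc\<close>)
    have "open ((*v) M -` box l u)"
      by (intro continuous_open_vimage open_box) (simp add: linear_continuous_at matrix_vector_mul_linear)
    then have "emeasure (distr lborel borel ((*v) M)) (box l u) = emeasure lebesgue ((*v) M' ` box l u)"
      by (simp add: emeasure_distr meas pre[symmetric] borel_open)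
    also have "\<dots> = measure lebesgue (box l u)"
      using lmeasurable_linear_image[OF matrix_vector_mul_linear, of "box l u" M']
        measure_linear_image_finite[OF matrix_vector_mul_linear, of "box l u" M'] M'(3)
      by (simp add: emeasure_eq_measure2 matrix_of_matrix_vector_mul)
    also have "\<dots> = (\<Prod>b\<in>Basis. (u - l) \<bullet> b)"
      using \<open>\<And>b. b \<in> Basis \<Longrightarrow> l \<bullet> b \<le> u \<bullet> b\<close>
      by (simp add: measure_def emeasure_lborel_box_eq prod_nonneg inner_diff_left)
    finally show "emeasure (distr lborel borel ((*v) M)) (box l u) = (\<Prod>b\<in>Basis. (u - l) \<bullet> b)" .
  qed simp
qed

lemma distr_lebesgue_matrix_vector_mult:
  fixes M :: "real^'n::finite^'n"
  assumes "\<bar>det M\<bar> = 1"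
  shows "distr lebesgue lebesgue ((*v) M) = lebesgue"
proof -
  have meas: "(*v) M \<in> lborel \<rightarrow>\<^sub>M lborel"
    by (simp add: borel_measurable_continuous_onI linear_continuous_on matrix_vector_mul_bounded_linear)
  have "distr lebesgue lborel ((*v) M) = distr lborel borel ((*v) M)"
    unfolding distr_completion[OF meas] by (rule distr_cong) simp_all
  then have "distr lebesgue lborel ((*v) M) = lborel"
    using distr_lborel_matrix_vector_mult[OF assms] by simp
  moreover have "completion (distr lebesgue lborel ((*v) M)) = distr lebesgue lebesgue ((*v) M)"
    using calculation meas by (intro completion.completion_distr_eq) (auto simp: measurable_completion)
  ultimately show ?thesis
    by simp
qed

text \<open>The integrand of \<open>Vorl\<close> need not be measurable (the gradient is chosen by \<open>SOME\<close>), so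
  \<open>nn_integral_distr\<close> does not apply; instead the bijection matches the simple functions below
  the two integrands.\<close>

lemma nn_integral_bij_measure_preserving:
  assumes f: "f \<in> M \<rightarrow>\<^sub>M M" and f': "f' \<in> M \<rightarrow>\<^sub>M M"
    and inv: "\<And>x. f' (f x) = x" "\<And>x. f (f' x) = x"
    and distr: "distr M M f = M"
  shows "(\<integral>\<^sup>+x. u (f x) \<partial>M) = (\<integral>\<^sup>+x. u x \<partial>M)"
proof -
  have simple: "integral\<^sup>S M (\<lambda>x. h (f x)) = integral\<^sup>S M h" if h: "simple_function M h" for h
  proof -
    have "integral\<^sup>S M (\<lambda>x. h (f x)) = (\<integral>\<^sup>+x. h (f x) \<partial>M)"
      using simple_function_comp[OF f h] by (rule nn_integral_eq_simple_integral[symmetric])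
    also have "\<dots> = integral\<^sup>N (distr M M f) h"
      using h f by (intro nn_integral_distr[symmetric]) (auto intro: borel_measurable_simple_function)
    finally show ?thesis
      using h by (simp add: distr nn_integral_eq_simple_integral)
  qed
  have below: "{h. simple_function M h \<and> h \<le> (\<lambda>x. u (f x))} = (\<lambda>h x. h (f x)) ` {h. simple_function M h \<and> h \<le> u}"
  proof (intro set_eqI iffI)
    fix h assume "h \<in> {h. simple_function M h \<and> h \<le> (\<lambda>x. u (f x))}"
    then have h: "simple_function M h" "\<And>x. h x \<le> u (f x)"
      by (auto simp: le_fun_def)
    have "h (f' y) \<le> u y" for y
      using h(2)[of "f' y"] by (simp add: inv)
    moreover have "h = (\<lambda>x. h (f' (f x)))"
      by (simp add: inv)
    ultimately show "h \<in> (\<lambda>h x. h (f x)) ` {h. simple_function M h \<and> h \<le> u}"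
      using simple_function_comp[OF f' h(1)] by (auto simp: le_fun_def image_iff)
  next
    fix h assume "h \<in> (\<lambda>h x. h (f x)) ` {h. simple_function M h \<and> h \<le> u}"
    then obtain k where "simple_function M k" "k \<le> u" "h = (\<lambda>x. k (f x))"
      by auto
    then show "h \<in> {h. simple_function M h \<and> h \<le> (\<lambda>x. u (f x))}"
      using simple_function_comp[OF f] by (auto simp: le_fun_def)
  qed
  show ?thesis
    unfolding nn_integral_def below image_image by (intro SUP_cong refl) (auto simp: simple)
qed

lemma integral_bij_measure_preserving:
  fixes u :: "'a \<Rightarrow> 'b::{banach, second_countable_topology}"
  assumes f: "f \<in> M \<rightarrow>\<^sub>M M" and f': "f' \<in> M \<rightarrow>\<^sub>M M"
    and inv: "\<And>x. f' (f x) = x" "\<And>x. f (f' x) = x"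
    and distr: "distr M M f = M"
  shows "integrable M (\<lambda>x. u (f x)) \<longleftrightarrow> integrable M u"
    and "(\<integral>x. u (f x) \<partial>M) = (\<integral>x. u x \<partial>M)"
proof -
  have meas_iff: "(\<lambda>x. u (f x)) \<in> borel_measurable M \<longleftrightarrow> u \<in> borel_measurable M"
  proof
    assume "(\<lambda>x. u (f x)) \<in> borel_measurable M"
    from measurable_compose[OF f' this] show "u \<in> borel_measurable M"
      by (simp add: inv)
  qed (rule measurable_compose[OF f])
  show int_iff: "integrable M (\<lambda>x. u (f x)) \<longleftrightarrow> integrable M u"
  proof (cases "u \<in> borel_measurable M")
    case True
    then show ?thesis
      using integrable_distr_eq[OF f, of u] by (simp add: distr)
  next
    case False
    then show ?thesis
      using meas_iff by (blast dest: borel_measurable_integrable)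
  qed
  show "(\<integral>x. u (f x) \<partial>M) = (\<integral>x. u x \<partial>M)"
  proof (cases "integrable M u")
    case True
    then show ?thesis
      using integral_distr[OF f, of u] by (simp add: distr borel_measurable_integrable)
  next
    case False
    then show ?thesis
      using int_iff by (simp add: not_integrable_integral_eq)
  qed
qed

lemma matrix_vector_mult_lebesgue_measurable:
  fixes M M' :: "real^'n::finite^'n"
  assumes "M ** M' = mat 1" "M' ** M = mat 1"
  shows "(*v) M \<in> lebesgue \<rightarrow>\<^sub>M lebesgue"
proof (rule measurableI)
  fix A :: "(real^'n) set"
  assume "A \<in> sets lebesgue"
  moreover have "(*v) M -` A = (*v) M' ` A"
  proof (intro set_eqI iffI)
    fix x assume "x \<in> (*v) M -` A"
    then show "x \<in> (*v) M' ` A"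
      using assms(2) by (intro rev_image_eqI[of "M *v x"]) (auto simp: matrix_vector_mul_assoc)
  qed (use assms(1) in \<open>auto simp: matrix_vector_mul_assoc\<close>)
  ultimately show "(*v) M -` A \<inter> space lebesgue \<in> sets lebesgue"
    by (auto intro!: differentiable_image_in_sets_lebesgue linear_imp_differentiable_on
        matrix_vector_mul_linear)
qed simp

lemma
  fixes M :: "real^'n::finite^'n" and v :: "real^'n \<Rightarrow> real"
  assumes "\<bar>det M\<bar> = 1"
  shows nn_integral_matrix_vector_mult: "(\<integral>\<^sup>+x. u (M *v x) \<partial>lebesgue) = (\<integral>\<^sup>+x. u x \<partial>lebesgue)"
    and integrable_matrix_vector_mult: "integrable lebesgue (\<lambda>x. v (M *v x)) \<longleftrightarrow> integrable lebesgue v"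
    and integral_matrix_vector_mult: "(\<integral>x. v (M *v x) \<partial>lebesgue) = (\<integral>x. v x \<partial>lebesgue)"
proof -
  obtain M' where M': "M ** M' = mat 1" "M' ** M = mat 1" "\<bar>det M'\<bar> = 1"
    using inverse_matrix_det_abs_1[OF assms] .
  note bij = matrix_vector_mult_lebesgue_measurable[OF M'(1,2)]
    matrix_vector_mult_lebesgue_measurable[OF M'(2,1)]
    _ _ distr_lebesgue_matrix_vector_mult[OF assms]
  show "(\<integral>\<^sup>+x. u (M *v x) \<partial>lebesgue) = (\<integral>\<^sup>+x. u x \<partial>lebesgue)"
    by (rule nn_integral_bij_measure_preserving[OF bij]) (simp_all add: matrix_vector_mul_assoc M')
  show "integrable lebesgue (\<lambda>x. v (M *v x)) \<longleftrightarrow> integrable lebesgue v"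
    by (rule integral_bij_measure_preserving(1)[OF bij]) (simp_all add: matrix_vector_mul_assoc M')
  show "(\<integral>x. v (M *v x) \<partial>lebesgue) = (\<integral>x. v x \<partial>lebesgue)"
    by (rule integral_bij_measure_preserving(2)[OF bij]) (simp_all add: matrix_vector_mul_assoc M')
qed

section \<open>Alexandrov Hessians under linear changes of variables\<close>

definition taylor_quotient :: "(real^'n::finite \<Rightarrow> ereal) \<Rightarrow> real^'n \<Rightarrow> real^'n \<Rightarrow> real^'n^'n
    \<Rightarrow> real^'n \<Rightarrow> real" where
  "taylor_quotient \<phi> x g A h = (real_of_ereal (\<phi> (x + h)) - real_of_ereal (\<phi> x) - g \<bullet> h
      - (1/2) * (h \<bullet> (A *v h))) / (norm h)\<^sup>2"

lemma alex_hess_iff_taylor_quotient: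
  "alex_hess \<phi> x g A \<longleftrightarrow> x \<in> interior (edom \<phi>) \<and> transpose A = A \<and>
     (taylor_quotient \<phi> x g A \<longlongrightarrow> 0) (at 0)"
  unfolding alex_hess_def taylor_quotient_def[abs_def] ..

lemma taylor_quotient_mult_norm:
  "taylor_quotient \<phi> x g A h * (norm h)\<^sup>2 =
     real_of_ereal (\<phi> (x + h)) - real_of_ereal (\<phi> x) - g \<bullet> h - (1/2) * (h \<bullet> (A *v h))"
  by (cases "h = 0") (simp_all add: taylor_quotient_def)

lemma tendsto_zero_quadratic_rescale:
  fixes L :: "'a::real_normed_vector \<Rightarrow> 'b::real_normed_vector" and Q :: "'b \<Rightarrow> real"
  assumes L: "bounded_linear L" and Q: "(Q \<longlongrightarrow> 0) (at 0)" "Q 0 = 0"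
    and rescale: "\<And>h. Q' h * (norm h)\<^sup>2 = Q (L h) * (norm (L h))\<^sup>2"
  shows "(Q' \<longlongrightarrow> 0) (at 0)"
proof -
  obtain K where K: "\<And>h. norm (L h) \<le> norm h * K"
    using bounded_linear.bounded[OF L] by blast
  have "\<forall>\<^sub>F h in at 0. norm (Q' h) \<le> K\<^sup>2 * norm (Q (L h))"
    unfolding eventually_at_filter
  proof (intro always_eventually allI impI)
    fix h :: 'a
    assume "h \<noteq> 0"
    have "norm (Q' h) * (norm h)\<^sup>2 = norm (Q (L h)) * (norm (L h))\<^sup>2"
      using arg_cong[OF rescale[of h], of abs] by (simp add: abs_mult)
    also have "\<dots> \<le> norm (Q (L h)) * (norm h * K)\<^sup>2"
      using K[of h] by (intro mult_left_mono power_mono) auto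
    finally show "norm (Q' h) \<le> K\<^sup>2 * norm (Q (L h))"
      using \<open>h \<noteq> 0\<close> by (simp add: power_mult_distrib mult.commute mult.left_commute)
  qed
  moreover have "(L \<longlongrightarrow> 0) (at 0)"
    using linear_continuous_at[OF L, of 0] linear_0[OF bounded_linear.linear[OF L]]
    by (simp add: isCont_def)
  then have "((\<lambda>h. Q (L h)) \<longlongrightarrow> 0) (at 0)"
    using tendsto_compose_at[OF _ Q(1), of L] Q(2) by (simp add: o_def)
  then have "((\<lambda>h. K\<^sup>2 * norm (Q (L h))) \<longlongrightarrow> 0) (at 0)"
    using tendsto_mult_right_zero tendsto_norm_zero by blast
  ultimately show ?thesis
    by (rule Lim_null_comparison)
qed

lemma alex_hess_matrix_comp:
  fixes M :: "real^'n::finite^'n"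
  assumes "alex_hess \<phi> (M *v x) g A"
  shows "alex_hess (\<lambda>x. \<phi> (M *v x)) x (transpose M *v g) (transpose M ** A ** M)"
proof -
  have "x \<in> (*v) M -` interior (edom \<phi>)"
    using assms by (simp add: alex_hess_def)
  moreover have "(*v) M -` interior (edom \<phi>) \<subseteq> interior (edom (\<lambda>x. \<phi> (M *v x)))"
    using interior_subset[of "edom \<phi>"]
    by (intro interior_maximal continuous_open_vimage[OF open_interior])
      (auto simp: edom_def linear_continuous_at matrix_vector_mul_bounded_linear)
  moreover have "transpose (transpose M ** A ** M) = transpose M ** A ** M"
    using assms by (simp add: alex_hess_def matrix_transpose_mul matrix_mul_assoc)
  moreover have "(taylor_quotient (\<lambda>x. \<phi> (M *v x)) x (transpose M *v g) (transpose M ** A ** M)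
      \<longlongrightarrow> 0) (at 0)"
  proof (rule tendsto_zero_quadratic_rescale)
    show "(taylor_quotient \<phi> (M *v x) g A \<longlongrightarrow> 0) (at 0)"
      using assms by (simp add: alex_hess_iff_taylor_quotient)
    fix h
    have "(transpose M *v g) \<bullet> h = g \<bullet> (M *v h)"
      by (simp add: dot_lmul_matrix)
    moreover have "h \<bullet> ((transpose M ** A ** M) *v h) = (M *v h) \<bullet> (A *v (M *v h))"
      by (metis dot_lmul_matrix inner_commute matrix_vector_mul_assoc transpose_matrix_vector)
    ultimately show "taylor_quotient (\<lambda>x. \<phi> (M *v x)) x (transpose M *v g) (transpose M ** A ** M) h * (norm h)\<^sup>2
        = taylor_quotient \<phi> (M *v x) g A (M *v h) * (norm (M *v h))\<^sup>2"
      by (simp add: taylor_quotient_mult_norm matrix_vector_right_distrib)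
  qed (auto simp: taylor_quotient_def matrix_vector_mul_bounded_linear)
  ultimately show ?thesis
    by (auto simp: alex_hess_iff_taylor_quotient)
qed

lemma first_order_coefficient_zero:
  fixes c :: "'a::real_inner" and q :: "'a \<Rightarrow> real"
  assumes lim: "((\<lambda>h. (c \<bullet> h + q h) / (norm h)\<^sup>2) \<longlongrightarrow> 0) (at 0)"
    and quadratic: "\<And>t h. q (t *\<^sub>R h) = t\<^sup>2 * q h"
  shows "c = 0"
proof (rule ccontr)
  assume "c \<noteq> 0"
  define D where "D h = (c \<bullet> h + q h) / (norm h)\<^sup>2" for h
  have "((\<lambda>t. t *\<^sub>R c) \<longlongrightarrow> 0) (at_right 0)"
    using tendsto_scaleR[OF tendsto_ident_at[of 0 "{0<..}"] tendsto_const[of c]] by simp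
  then have "((\<lambda>t. D (t *\<^sub>R c)) \<longlongrightarrow> 0) (at_right 0)"
    using tendsto_compose_at[OF _ lim[folded D_def], of "\<lambda>t. t *\<^sub>R c"] by (simp add: o_def D_def)
  then have "((\<lambda>t. t * D (t *\<^sub>R c)) \<longlongrightarrow> 0) (at_right 0)"
    using tendsto_mult[OF tendsto_ident_at[of 0 "{0<..}"]] by fastforce
  moreover have "((\<lambda>t. t * D (t *\<^sub>R c)) \<longlongrightarrow> 1) (at_right 0)"
  proof (rule Lim_transform_eventually)
    show "((\<lambda>t. 1 + t * (q c / (c \<bullet> c))) \<longlongrightarrow> 1) (at_right 0)"
      using \<open>c \<noteq> 0\<close> by (auto intro!: tendsto_eq_intros)
    \<comment> \<open>along the ray through \<open>c\<close> the quotient is \<open>1/t + q c / |c|\<^sup>2\<close>\<close>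
    show "\<forall>\<^sub>F t in at_right 0. 1 + t * (q c / (c \<bullet> c)) = t * D (t *\<^sub>R c)"
      using eventually_at_right_less[of 0]
    proof eventually_elim
      case (elim t)
      then show ?case
        using \<open>c \<noteq> 0\<close> by (simp add: D_def quadratic dot_square_norm field_simps power2_eq_square)
    qed
  qed
  ultimately show False
    using tendsto_unique[OF trivial_limit_at_right_real] by fastforce
qed

lemma alex_hess_gradient_unique:
  assumes "alex_hess \<phi> x g A" "alex_hess \<phi> x g' A'"
  shows "g = g'"
proof -
  define q where "q h = (1/2) * (h \<bullet> (A' *v h) - h \<bullet> (A *v h))" for h
  have "((\<lambda>h. taylor_quotient \<phi> x g A h - taylor_quotient \<phi> x g' A' h) \<longlongrightarrow> 0 - 0) (at 0)"
    using assms by (intro tendsto_diff) (auto simp: alex_hess_iff_taylor_quotient)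
  moreover have "taylor_quotient \<phi> x g A h - taylor_quotient \<phi> x g' A' h
      = ((g' - g) \<bullet> h + q h) / (norm h)\<^sup>2" for h
    by (cases "h = 0") (simp_all add: taylor_quotient_def q_def field_simps inner_diff_left)
  moreover have "q (t *\<^sub>R h) = t\<^sup>2 * q h" for t h
    by (simp add: q_def matrix_vector_mult_scaleR power2_eq_square algebra_simps)
  ultimately have "g' - g = 0"
    by (intro first_order_coefficient_zero[of "g' - g" q]) simp_all
  then show ?thesis
    by simp
qed

lemma grad_eqI:
  assumes "alex_hess \<phi> x g A"
  shows "grad \<phi> x = g"
proof -
  have "\<exists>A. alex_hess \<phi> x (grad \<phi> x) A"
    unfolding grad_def by (rule someI_ex) (use assms in blast)
  then show ?thesis
    using alex_hess_gradient_unique assms by blast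
qed

lemma Xset_matrix_comp:
  fixes M M' :: "real^'n::finite^'n"
  assumes M': "M ** M' = mat 1" "M' ** M = mat 1"
  shows "x \<in> Xset (\<lambda>x. \<phi> (M *v x)) \<longleftrightarrow> M *v x \<in> Xset \<phi>"
proof -
  have invertible_congruence: "invertible (transpose N ** A ** N)"
    if "invertible N" "invertible A" for N A :: "real^'n^'n"
    using that by (intro invertible_mult transpose_invertible)
  have "invertible M" "invertible M'"
    using M' by (auto simp: invertible_def)
  show ?thesis
  proof
    assume "M *v x \<in> Xset \<phi>"
    then obtain g A where "\<phi> (M *v x) < \<infinity>" "alex_hess \<phi> (M *v x) g A" "invertible A"
      unfolding Xset_def by blast
    with alex_hess_matrix_comp invertible_congruence[OF \<open>invertible M\<close>]
    show "x \<in> Xset (\<lambda>x. \<phi> (M *v x))"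
      unfolding Xset_def by blast
  next
    assume "x \<in> Xset (\<lambda>x. \<phi> (M *v x))"
    then obtain g A where "\<phi> (M *v x) < \<infinity>" "invertible A"
      "alex_hess (\<lambda>x. \<phi> (M *v x)) (M' *v (M *v x)) g A"
      unfolding Xset_def by (auto simp: matrix_vector_mul_assoc M'(2))
    note alex_hess_matrix_comp[where M = M' and \<phi> = "\<lambda>x. \<phi> (M *v x)", OF this(3)]
    moreover have "(\<lambda>z. \<phi> (M *v (M' *v z))) = \<phi>"
      by (simp add: matrix_vector_mul_assoc M'(1))
    ultimately have "alex_hess \<phi> (M *v x) (transpose M' *v g) (transpose M' ** A ** M')"
      by simp
    with \<open>\<phi> (M *v x) < \<infinity>\<close> invertible_congruence[OF \<open>invertible M'\<close> \<open>invertible A\<close>]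
    show "M *v x \<in> Xset \<phi>"
      unfolding Xset_def by blast
  qed
qed

lemma grad_matrix_comp:
  fixes M :: "real^'n::finite^'n"
  assumes "M *v x \<in> Xset \<phi>"
  shows "grad (\<lambda>x. \<phi> (M *v x)) x = transpose M *v grad \<phi> (M *v x)"
proof -
  obtain g A where "alex_hess \<phi> (M *v x) g A"
    using assms unfolding Xset_def by blast
  then show ?thesis
    using alex_hess_matrix_comp grad_eqI by metis
qed

lemma legendre_matrix_comp:
  fixes M M' :: "real^'n::finite^'n"
  assumes "M ** M' = mat 1" "M' ** M = mat 1"
  shows "legendre (\<lambda>x. \<phi> (M *v x)) y = legendre \<phi> (transpose M' *v y)"
proof -
  have "surj ((*v) M')"
    using assms(2) by (metis matrix_vector_mul_assoc matrix_vector_mul_lid surjI)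
  then have "(SUP x. ereal (x \<bullet> y) - \<phi> (M *v x)) = (SUP z. ereal ((M' *v z) \<bullet> y) - \<phi> (M *v (M' *v z)))"
    by (simp add: image_image[symmetric, of "\<lambda>x. ereal (x \<bullet> y) - \<phi> (M *v x)" "(*v) M'"])
  also have "\<dots> = (SUP z. ereal (z \<bullet> (transpose M' *v y)) - \<phi> z)"
  proof -
    have "(M' *v z) \<bullet> y = z \<bullet> (transpose M' *v y)" for z
      by (metis dot_lmul_matrix inner_commute transpose_matrix_vector)
    then show ?thesis
      by (simp add: matrix_vector_mul_assoc assms(1))
  qed
  finally show ?thesis
    unfolding legendre_def .
qed

section \<open>Invariance of the Orlicz affine surface areas\<close>

lemma
  fixes N N' :: "real^'n::finite^'n"
  assumes N': "N ** N' = mat 1" "N' ** N = mat 1" and det: "\<bar>det N\<bar> = 1"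
  shows Iint_matrix_comp: "Iint (\<lambda>y. g (N *v y)) (\<lambda>y. \<xi> (N *v y)) = Iint g \<xi>"
    and set_integrable_Xset_matrix_comp:
      "set_integrable lebesgue (Xset (\<lambda>y. \<xi> (N *v y))) (\<lambda>y. g (N *v y)) \<longleftrightarrow>
       set_integrable lebesgue (Xset \<xi>) g"
proof -
  have "(\<lambda>y. indicator (Xset (\<lambda>y. \<xi> (N *v y))) y *\<^sub>R g (N *v y))
      = (\<lambda>y. indicator (Xset \<xi>) (N *v y) *\<^sub>R g (N *v y))"
    using Xset_matrix_comp[OF N'] by (simp add: indicator_def)
  then show "Iint (\<lambda>y. g (N *v y)) (\<lambda>y. \<xi> (N *v y)) = Iint g \<xi>"
    and "set_integrable lebesgue (Xset (\<lambda>y. \<xi> (N *v y))) (\<lambda>y. g (N *v y)) \<longleftrightarrow>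
       set_integrable lebesgue (Xset \<xi>) g"
    unfolding Iint_def set_lebesgue_integral_def set_integrable_def
    using integral_matrix_vector_mult[OF det, where v = "\<lambda>x. indicator (Xset \<xi>) x *\<^sub>R g x"]
      integrable_matrix_vector_mult[OF det, where v = "\<lambda>x. indicator (Xset \<xi>) x *\<^sub>R g x"]
    by simp_all
qed

lemma log_concave_linear_comp:
  assumes "log_concave g" "linear f"
  shows "log_concave (\<lambda>y. g (f y))"
  using assms unfolding log_concave_def by (simp add: linear_add linear_scale)

lemma Fplus_matrix_comp:
  fixes N N' :: "real^'n::finite^'n"
  assumes "N ** N' = mat 1" "N' ** N = mat 1" "\<bar>det N\<bar> = 1" "g \<in> Fplus \<xi>"
  shows "(\<lambda>y. g (N *v y)) \<in> Fplus (\<lambda>y. \<xi> (N *v y))"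
  using assms Iint_matrix_comp[OF assms(1-3)] set_integrable_Xset_matrix_comp[OF assms(1-3)]
    Xset_matrix_comp[OF assms(1,2)]
  unfolding Fplus_def by auto

lemma
  fixes N N' :: "real^'n::finite^'n"
  assumes N': "N ** N' = mat 1" "N' ** N = mat 1" and det: "\<bar>det N\<bar> = 1" "\<bar>det N'\<bar> = 1"
  shows Fplus_matrix_comp_eq: "Fplus (\<lambda>y. \<xi> (N *v y)) = (\<lambda>g y. g (N *v y)) ` Fplus \<xi>"
    and Lclass_matrix_comp_eq: "Lclass (\<lambda>y. \<xi> (N *v y)) = (\<lambda>g y. g (N *v y)) ` Lclass \<xi>"
proof -
  have inv: "(\<lambda>y. g (N' *v (N *v y))) = g" "(\<lambda>y. g (N *v (N' *v y))) = g" for g :: "real^'n \<Rightarrow> 'b"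
    by (simp_all add: matrix_vector_mul_assoc N')
  have "bij_betw (\<lambda>g y. g (N *v y)) (Fplus \<xi>) (Fplus (\<lambda>y. \<xi> (N *v y)))"
    using Fplus_matrix_comp[OF N' det(1)] Fplus_matrix_comp[OF N'(2,1) det(2), of _ "\<lambda>y. \<xi> (N *v y)"]
    by (intro bij_betw_byWitness[where f' = "\<lambda>g y. g (N' *v y)"]) (auto simp: inv)
  then show "Fplus (\<lambda>y. \<xi> (N *v y)) = (\<lambda>g y. g (N *v y)) ` Fplus \<xi>"
    by (simp add: bij_betw_def)
  have "bij_betw (\<lambda>g y. g (N *v y)) (Lclass \<xi>) (Lclass (\<lambda>y. \<xi> (N *v y)))"
    using Fplus_matrix_comp[OF N' det(1)] Fplus_matrix_comp[OF N'(2,1) det(2), of _ "\<lambda>y. \<xi> (N *v y)"]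
      log_concave_linear_comp[OF _ matrix_vector_mul_linear]
    unfolding Lclass_def
    by (intro bij_betw_byWitness[where f' = "\<lambda>g y. g (N' *v y)"]) (auto simp: inv)
  then show "Lclass (\<lambda>y. \<xi> (N *v y)) = (\<lambda>g y. g (N *v y)) ` Lclass \<xi>"
    by (simp add: bij_betw_def)
qed

lemma Vorl_matrix_comp:
  fixes T T' :: "real^'n::finite^'n"
  assumes T': "T ** T' = mat 1" "T' ** T = mat 1" and det: "\<bar>det T\<bar> = 1"
  shows "Vorl h F1 F2 (\<lambda>x. \<psi> (T *v x)) (\<lambda>y. G (transpose T' *v y)) = Vorl h F1 F2 \<psi> G"
proof -
  define I where "I = (\<lambda>x. ennreal (h (G (grad \<psi> x) / F2 (x \<bullet> grad \<psi> x - real_of_ereal (\<psi> x)))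
      * F1 (real_of_ereal (\<psi> x))) * indicator (Xset \<psi>) x)"
  have "ennreal (h (G (transpose T' *v grad (\<lambda>x. \<psi> (T *v x)) x)
        / F2 (x \<bullet> grad (\<lambda>x. \<psi> (T *v x)) x - real_of_ereal (\<psi> (T *v x))))
        * F1 (real_of_ereal (\<psi> (T *v x)))) * indicator (Xset (\<lambda>x. \<psi> (T *v x))) x
      = I (T *v x)" for x
  proof (cases "T *v x \<in> Xset \<psi>")
    case True
    \<comment> \<open>the gradient transforms by \<open>T\<^sup>T\<close>, which \<open>T'\<^sup>T\<close> undoes, and \<open>\<langle>x, \<nabla>\<psi>(T x)\<rangle>\<close> is invariant\<close>
    have "transpose T' *v grad (\<lambda>x. \<psi> (T *v x)) x = grad \<psi> (T *v x)"
      using grad_matrix_comp[OF True]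
      by (simp add: vector_matrix_mul_assoc T')
    moreover have "x \<bullet> grad (\<lambda>x. \<psi> (T *v x)) x = (T *v x) \<bullet> grad \<psi> (T *v x)"
      using grad_matrix_comp[OF True] by (metis dot_lmul_matrix inner_commute transpose_matrix_vector)
    ultimately show ?thesis
      using True Xset_matrix_comp[OF T'] by (simp add: I_def)
  qed (simp add: I_def Xset_matrix_comp[OF T'])
  then have "Vorl h F1 F2 (\<lambda>x. \<psi> (T *v x)) (\<lambda>y. G (transpose T' *v y)) = (\<integral>\<^sup>+x. I (T *v x) \<partial>lebesgue)"
    by (simp add: Vorl_def)
  also have "\<dots> = Vorl h F1 F2 \<psi> G"
    unfolding nn_integral_matrix_vector_mult[OF det] by (simp add: Vorl_def I_def)
  finally show ?thesis .
qed

lemma normalize_matrix_comp: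
  fixes T T' :: "real^'n::finite^'n"
  assumes T': "T ** T' = mat 1" "T' ** T = mat 1" and det: "\<bar>det T'\<bar> = 1"
  shows "normalize (\<lambda>x. \<psi> (T *v x)) (\<lambda>y. g (transpose T' *v y))
       = (\<lambda>y. normalize \<psi> g (transpose T' *v y))"
proof -
  have N': "transpose T' ** transpose T = mat 1" "transpose T ** transpose T' = mat 1"
    by (simp_all add: matrix_transpose_mul[symmetric] T')
  show ?thesis
    unfolding normalize_def legendre_matrix_comp[OF T', abs_def]
    using Iint_matrix_comp[OF N', of g "legendre \<psi>"] det by simp
qed

lemma orlicz_affine_surface_areas_matrix_comp:
  fixes \<psi> :: "real^'n::finite \<Rightarrow> ereal" and T :: "real^'n^'n"
  assumes T: "\<bar>det T\<bar> = 1"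
  shows "as_orlicz_inf h F1 F2 (\<lambda>x. \<psi> (T *v x)) = as_orlicz_inf h F1 F2 \<psi>"
    and "G_orlicz_inf h F1 F2 (\<lambda>x. \<psi> (T *v x)) = G_orlicz_inf h F1 F2 \<psi>"
    and "as_orlicz_sup h F1 F2 (\<lambda>x. \<psi> (T *v x)) = as_orlicz_sup h F1 F2 \<psi>"
    and "G_orlicz_sup h F1 F2 (\<lambda>x. \<psi> (T *v x)) = G_orlicz_sup h F1 F2 \<psi>"
proof -
  obtain T' where T': "T ** T' = mat 1" "T' ** T = mat 1" "\<bar>det T'\<bar> = 1"
    using inverse_matrix_det_abs_1[OF T] .
  define N where "N = transpose T'"
  have N: "N ** transpose T = mat 1" "transpose T ** N = mat 1" "\<bar>det N\<bar> = 1" "\<bar>det (transpose T)\<bar> = 1"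
    using T T' by (simp_all add: N_def matrix_transpose_mul[symmetric])
  have V: "Vorl h F1 F2 (\<lambda>x. \<psi> (T *v x)) (normalize (\<lambda>x. \<psi> (T *v x)) (\<lambda>y. g (N *v y)))
      = Vorl h F1 F2 \<psi> (normalize \<psi> g)" for g
    unfolding N_def normalize_matrix_comp[OF T'] Vorl_matrix_comp[OF T'(1,2) T] ..
  have legendre: "legendre (\<lambda>x. \<psi> (T *v x)) = (\<lambda>y. legendre \<psi> (N *v y))"
    unfolding N_def using legendre_matrix_comp[OF T'(1,2)] by blast
  note classes = Fplus_matrix_comp_eq[OF N] Lclass_matrix_comp_eq[OF N]
  show "as_orlicz_inf h F1 F2 (\<lambda>x. \<psi> (T *v x)) = as_orlicz_inf h F1 F2 \<psi>"
    "G_orlicz_inf h F1 F2 (\<lambda>x. \<psi> (T *v x)) = G_orlicz_inf h F1 F2 \<psi>"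
    "as_orlicz_sup h F1 F2 (\<lambda>x. \<psi> (T *v x)) = as_orlicz_sup h F1 F2 \<psi>"
    "G_orlicz_sup h F1 F2 (\<lambda>x. \<psi> (T *v x)) = G_orlicz_sup h F1 F2 \<psi>"
    unfolding as_orlicz_inf_def G_orlicz_inf_def as_orlicz_sup_def G_orlicz_sup_def
      legendre classes image_image V by simp_all
qed

text \<open>The invariance holds for every \<open>\<psi>\<close>, \<open>F\<^sub>1\<close>, \<open>F\<^sub>2\<close> and \<open>h\<close>.\<close>

theorem theorem2p2:
  fixes \<psi> :: "real ^ 'n::finite \<Rightarrow> ereal"
    and F1 F2 h :: "real \<Rightarrow> real"
    and T :: "real ^ 'n ^ 'n"
  assumes psi: "convex_class \<psi>"
    and F1: "F1 \<in> borel_measurable borel" "\<forall>t. 0 < F1 t"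
    and F2: "F2 \<in> borel_measurable borel" "\<forall>t. 0 < F2 t"
    and h_cont: "continuous_on {0<..} h" and h_pos: "\<forall>t>0. 0 < h t"
    and h_class: "h \<in> PhiClass \<union> PsiClass"
    and T: "det T = 1 \<or> det T = -1"
  shows "(h \<in> PhiClass \<longrightarrow>
            as_orlicz_inf h F1 F2 (\<lambda>x. \<psi> (T *v x)) = as_orlicz_inf h F1 F2 \<psi> \<and>
            G_orlicz_inf h F1 F2 (\<lambda>x. \<psi> (T *v x)) = G_orlicz_inf h F1 F2 \<psi>)
       \<and> (h \<in> PsiClass \<longrightarrow>
            as_orlicz_sup h F1 F2 (\<lambda>x. \<psi> (T *v x)) = as_orlicz_sup h F1 F2 \<psi> \<and>
            G_orlicz_sup h F1 F2 (\<lambda>x. \<psi> (T *v x)) = G_orlicz_sup h F1 F2 \<psi>)"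
  using orlicz_affine_surface_areas_matrix_comp[of T] T by auto

end
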